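(* Let $\mathfrak g$ be a compact simple Lie algebra with $\dim\mathfrak g\ge8$, and let $\Theta:\Lambda^3\mathfrak g\to\mathfrak g\otimes\mathfrak g^\perp$, $T\mapsto\sum_i e_i\otimes\Pi_{\mathfrak g^\perp}(e_i\lrcorner T)$, where $(e_i)$ is an orthonormal basis of $\mathfrak g$ and $\Pi_{\mathfrak g^\perp}$ the orthogonal projection $\Lambda^2\mathfrak g\to\mathfrak g^\perp$. Then $\ker\Theta=\mathbb R\,\omega_{\mathfrak g}$.
   Context: $\mathfrak g$ compact simple real Lie algebra, $B$ its Killing form, inner product $\langle\cdot,\cdot\rangle:=-B$ extended to $\Lambda^k\mathfrak g$ and used to identify $\mathfrak g\cong\mathfrak g^*$ (so $e_i\lrcorner T\in\Lambda^2\mathfrak g$); $\omega_{\mathfrak g}(X,Y,Z)=B(X,[Y,Z])$; $\mathfrak g^\perp:=\ker(\Lambda^2\mathfrak g\to\mathfrak g,\ v\wedge w\mapsto[v,w])$. *)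

theory Defs
  imports "HOL-Analysis.Analysis"
begin

text \<open>A finite-dimensional real Lie algebra: the underlying vector space is a
  Euclidean-space type (used only for its real vector space structure and
  finite dimension; its built-in inner product plays no role beyond computing
  traces), with a bracket br.\<close>

definition lie_algebra :: "('a::euclidean_space \<Rightarrow> 'a \<Rightarrow> 'a) \<Rightarrow> bool" where
  "lie_algebra br \<longleftrightarrow>
     (\<forall>x. linear (br x)) \<and> (\<forall>y. linear (\<lambda>x. br x y)) \<and>
     (\<forall>x. br x x = 0) \<and>
     (\<forall>x y z. br x (br y z) + br y (br z x) + br z (br x y) = 0)"

definition trace_map :: "('a::euclidean_space \<Rightarrow> 'a) \<Rightarrow> real" where
  "trace_map f = (\<Sum>b\<in>Basis. f b \<bullet> b)"

definition killing :: "('a::euclidean_space \<Rightarrow> 'a \<Rightarrow> 'a) \<Rightarrow> 'a \<Rightarrow> 'a \<Rightarrow> real" where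
  "killing br x y = trace_map (\<lambda>z. br x (br y z))"

definition lie_ideal :: "('a::euclidean_space \<Rightarrow> 'a \<Rightarrow> 'a) \<Rightarrow> 'a set \<Rightarrow> bool" where
  "lie_ideal br I \<longleftrightarrow> subspace I \<and> (\<forall>x\<in>I. \<forall>y. br x y \<in> I)"

definition compact_simple :: "('a::euclidean_space \<Rightarrow> 'a \<Rightarrow> 'a) \<Rightarrow> bool" where
  "compact_simple br \<longleftrightarrow> lie_algebra br \<and>
     (\<exists>x y. br x y \<noteq> 0) \<and>
     (\<forall>I. lie_ideal br I \<longrightarrow> I = {0} \<or> I = UNIV) \<and>
     (\<forall>x. x \<noteq> 0 \<longrightarrow> killing br x x < 0)"

definition ip :: "('a::euclidean_space \<Rightarrow> 'a \<Rightarrow> 'a) \<Rightarrow> 'a \<Rightarrow> 'a \<Rightarrow> real" where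
  "ip br x y = - killing br x y"

definition orthonormal_basis :: "('a::euclidean_space \<Rightarrow> 'a \<Rightarrow> 'a) \<Rightarrow> (nat \<Rightarrow> 'a) \<Rightarrow> bool" where
  "orthonormal_basis br e \<longleftrightarrow>
     (\<forall>i<DIM('a). \<forall>j<DIM('a). ip br (e i) (e j) = (if i = j then 1 else 0))"

text \<open>Via g = g*, Lambda^k g is identified with alternating k-linear forms on g.\<close>
definition alt2 :: "('a::euclidean_space \<Rightarrow> 'a \<Rightarrow> real) \<Rightarrow> bool" where
  "alt2 b \<longleftrightarrow> (\<forall>x. linear (b x)) \<and> (\<forall>y. linear (\<lambda>x. b x y)) \<and> (\<forall>x. b x x = 0)"

definition alt3 :: "('a::euclidean_space \<Rightarrow> 'a \<Rightarrow> 'a \<Rightarrow> real) \<Rightarrow> bool" where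
  "alt3 T \<longleftrightarrow> (\<forall>x. alt2 (T x)) \<and> (\<forall>y z. linear (\<lambda>x. T x y z)) \<and>
     (\<forall>x y z. T x y z = - T y x z)"

text \<open>Inner product on Lambda^2 g induced by <.,.> (up to an irrelevant factor 2).\<close>
definition ip2 :: "(nat \<Rightarrow> 'a::euclidean_space) \<Rightarrow> ('a \<Rightarrow> 'a \<Rightarrow> real) \<Rightarrow> ('a \<Rightarrow> 'a \<Rightarrow> real) \<Rightarrow> real" where
  "ip2 e a b = (\<Sum>j<DIM('a). \<Sum>k<DIM('a). a (e j) (e k) * b (e j) (e k))"

text \<open>g-perp: kernel of Lambda^2 g -> g, v /\ w |-> [v,w].  The bivector of the
  form b is sum_{j<k} b(e_j,e_k) e_j /\ e_k.\<close>
definition gperp :: "('a::euclidean_space \<Rightarrow> 'a \<Rightarrow> 'a) \<Rightarrow> (nat \<Rightarrow> 'a) \<Rightarrow> ('a \<Rightarrow> 'a \<Rightarrow> real) set" where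
  "gperp br e = {b. alt2 b \<and> (\<Sum>j<DIM('a). \<Sum>k<DIM('a). b (e j) (e k) *\<^sub>R br (e j) (e k)) = 0}"

definition proj_gperp :: "('a::euclidean_space \<Rightarrow> 'a \<Rightarrow> 'a) \<Rightarrow> (nat \<Rightarrow> 'a) \<Rightarrow> ('a \<Rightarrow> 'a \<Rightarrow> real) \<Rightarrow> ('a \<Rightarrow> 'a \<Rightarrow> real)" where
  "proj_gperp br e b = (THE c. c \<in> gperp br e \<and>
      (\<forall>d\<in>gperp br e. ip2 e (\<lambda>x y. b x y - c x y) d = 0))"

text \<open>Theta(T) = sum_i e_i (x) Pi(e_i -| T), an element of g (x) g-perp, viewed
  as the trilinear form (x,y,z) |-> sum_i <e_i,x> Pi(e_i -| T)(y,z).\<close>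
definition Theta :: "('a::euclidean_space \<Rightarrow> 'a \<Rightarrow> 'a) \<Rightarrow> (nat \<Rightarrow> 'a) \<Rightarrow> ('a \<Rightarrow> 'a \<Rightarrow> 'a \<Rightarrow> real) \<Rightarrow> ('a \<Rightarrow> 'a \<Rightarrow> 'a \<Rightarrow> real)" where
  "Theta br e T = (\<lambda>x y z. \<Sum>i<DIM('a). ip br (e i) x * proj_gperp br e (T (e i)) y z)"

definition omega_g :: "('a::euclidean_space \<Rightarrow> 'a \<Rightarrow> 'a) \<Rightarrow> 'a \<Rightarrow> 'a \<Rightarrow> 'a \<Rightarrow> real" where
  "omega_g br x y z = killing br x (br y z)"

end

theory Submission
  imports Defs
begin

(*
  Write <.,.> = -B and, for v in g, let mus v be the 2-form (y,z) |-> <v,[y,z]>;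
  these are precisely the 2-forms orthogonal to g-perp, so the orthogonal
  projection onto g-perp kills a 2-form b iff b = mus v for some v.  Hence
  Theta(T) = 0 means that every slice T(x,.,.) equals mus (phi x) for a linear
  map phi, i.e. T(x,y,z) = <phi x,[y,z]>.  Skew-symmetry of T in x,y then says
  [phi x,y] = [x,phi y].  Such a phi is self-adjoint for <.,.> (this uses that
  ad u is traceless, which holds because g = [g,g]) and commutes with every
  ad y; a self-adjoint map has a real eigenvector (maximise its Rayleigh
  quotient on the unit sphere), its eigenspace is an ideal, and simplicity
  forces phi = lam id (Schur's lemma).  Thus T = -lam omega_g; conversely
  every c omega_g = mus (-c x) slice-wise lies in the kernel.
*)

lemma trace_cyclic:
  fixes f g :: "'a::euclidean_space \<Rightarrow> 'a"
  assumes "linear f" "linear g"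
  shows "trace_map (\<lambda>z. f (g z)) = trace_map (\<lambda>z. g (f z))"
proof -
  have comp: "trace_map (\<lambda>z. h (k z)) = (\<Sum>b\<in>Basis. \<Sum>c\<in>Basis. (k b \<bullet> c) * (h c \<bullet> b))"
    if "linear h" for h k :: "'a \<Rightarrow> 'a"
    unfolding trace_map_def
  proof (rule sum.cong[OF refl])
    fix b :: 'a
    have "h (k b) = h (\<Sum>c\<in>Basis. (k b \<bullet> c) *\<^sub>R c)" by (simp add: euclidean_representation)
    also have "\<dots> = (\<Sum>c\<in>Basis. (k b \<bullet> c) *\<^sub>R h c)" using that by (simp add: linear_sum linear_scale)
    finally show "h (k b) \<bullet> b = (\<Sum>c\<in>Basis. (k b \<bullet> c) * (h c \<bullet> b))"
      by (simp add: inner_sum_left)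
  qed
  show ?thesis
    unfolding comp[OF assms(1)] comp[OF assms(2)] by (subst sum.swap) (simp add: mult.commute)
qed

lemma trace_diff: "trace_map (\<lambda>z. f z - g z) = trace_map f - trace_map g"
  by (simp add: trace_map_def inner_diff_left sum_subtractf)

lemma trace_add: "trace_map (\<lambda>z. f z + g z) = trace_map f + trace_map g"
  by (simp add: trace_map_def inner_add_left sum.distrib)

lemma trace_scale: "trace_map (\<lambda>z. c *\<^sub>R f z) = c * trace_map f"
  by (simp add: trace_map_def sum_distrib_left)

subsection \<open>Self-adjoint maps have real eigenvectors\<close>

lemma nonneg_quadratic_linear_coeff:
  fixes a c :: real
  assumes nonneg: "\<And>t. 0 \<le> 2 * t * a + t * t * c"
  shows "a = 0"
proof (rule ccontr)
  assume "a \<noteq> 0"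
  define s where "s = \<bar>c\<bar> + 1"
  have s: "s > 0" by (simp add: s_def)
  have "2 * (- a / s) * a + (- a / s) * (- a / s) * c = a * a * (c - 2 * s) / (s * s)"
    using s by (simp add: field_simps)
  also have "\<dots> < 0"
  proof (rule divide_neg_pos)
    have "0 < a * a" using \<open>a \<noteq> 0\<close> by (simp add: zero_less_mult_iff) linarith
    thus "a * a * (c - 2 * s) < 0" by (intro mult_pos_neg) (auto simp: s_def)
  qed (use s in simp)
  finally show False using nonneg[of "- a / s"] by simp
qed

lemma rayleigh_maximiser:
  fixes q :: "'a::euclidean_space \<Rightarrow> 'a \<Rightarrow> real" and phi :: "'a \<Rightarrow> 'a"
  assumes q: "bilinear q" and q_pos: "\<And>x. x \<noteq> 0 \<Longrightarrow> q x x > 0" and phi: "linear phi"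
  obtains x0 lam where "x0 \<noteq> 0" "q (phi x0) x0 = lam * q x0 x0" "\<And>y. q (phi y) y \<le> lam * q y y"
proof -
  define R where "R x = q (phi x) x / q x x" for x
  have cont_phi: "continuous_on (sphere 0 1) phi"
    using phi linear_conv_bounded_linear linear_continuous_on by blast
  have "continuous_on (sphere 0 1) R"
    unfolding R_def
  proof (rule continuous_on_divide)
    show "continuous_on (sphere 0 1) (\<lambda>x. q (phi x) x)"
      by (rule bilinear_continuous_on_compose[OF cont_phi continuous_on_id q])
    show "continuous_on (sphere 0 1) (\<lambda>x. q x x)"
      by (rule bilinear_continuous_on_compose[OF continuous_on_id continuous_on_id q])
    show "\<forall>x\<in>sphere 0 1. q x x \<noteq> 0"
      using q_pos by (metis less_irrefl norm_zero mem_sphere_0 zero_neq_one)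
  qed
  moreover have "sphere (0::'a) 1 \<noteq> {}"
    using nonempty_Basis by (metis ex_in_conv mem_sphere_0 norm_Basis)
  ultimately obtain x0 where x0: "x0 \<in> sphere 0 1" "\<And>y. y \<in> sphere 0 1 \<Longrightarrow> R y \<le> R x0"
    using continuous_attains_sup[OF compact_sphere] by blast
  have x0_nz: "x0 \<noteq> 0" using x0(1) by auto
  have scale_inv: "R (c *\<^sub>R y) = R y" if "c \<noteq> 0" for c y
    using that by (simp add: R_def linear_scale[OF phi] bilinear_lmul[OF q] bilinear_rmul[OF q])
  have "q (phi y) y \<le> R x0 * q y y" for y
  proof (cases "y = 0")
    case True
    thus ?thesis by (simp add: bilinear_lzero[OF q] bilinear_rzero[OF q])
  next
    case False
    have "R y = R ((1 / norm y) *\<^sub>R y)" using False by (simp add: scale_inv)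
    also have "\<dots> \<le> R x0" using False by (intro x0(2)) simp
    finally show ?thesis using q_pos[OF False] by (simp add: R_def divide_le_eq)
  qed
  moreover have "q (phi x0) x0 = R x0 * q x0 x0" using q_pos[OF x0_nz] by (simp add: R_def)
  ultimately show thesis using that x0_nz by blast
qed

text \<open>A maximiser of the Rayleigh quotient of a q-self-adjoint map is an
  eigenvector: the first variation of the quotient vanishes.\<close>
lemma rayleigh_maximiser_eigenvector:
  fixes q :: "'a::real_vector \<Rightarrow> 'a \<Rightarrow> real" and phi :: "'a \<Rightarrow> 'a"
  assumes q: "bilinear q" "\<And>x y. q x y = q y x" "\<And>x. x \<noteq> 0 \<Longrightarrow> q x x > 0"
    and phi: "linear phi" "\<And>x y. q (phi x) y = q x (phi y)"
    and max: "\<And>y. q (phi y) y \<le> lam * q y y" and at_x0: "q (phi x0) x0 = lam * q x0 x0"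
  shows "phi x0 = lam *\<^sub>R x0"
proof -
  define d where "d = lam *\<^sub>R x0 - phi x0"
  have orth: "q d w = 0" for w
  proof (rule nonneg_quadratic_linear_coeff)
    fix t :: real
    have "q (phi (x0 + t *\<^sub>R w)) (x0 + t *\<^sub>R w) \<le> lam * q (x0 + t *\<^sub>R w) (x0 + t *\<^sub>R w)"
      by (rule max)
    moreover have "q (phi w) x0 = q (phi x0) w" "q w x0 = q x0 w"
      using phi(2)[of w x0] q(2) by metis+
    ultimately show "0 \<le> 2 * t * q d w + t * t * (lam * q w w - q (phi w) w)"
      using at_x0 unfolding d_def
      by (simp add: linear_add[OF phi(1)] linear_scale[OF phi(1)] bilinear_ladd[OF q(1)]
          bilinear_radd[OF q(1)] bilinear_lmul[OF q(1)] bilinear_rmul[OF q(1)]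
          bilinear_lsub[OF q(1)] algebra_simps)
  qed
  have "d = 0" using orth[of d] q(3) by force
  thus ?thesis by (simp add: d_def)
qed

lemma selfadjoint_has_eigenvector:
  fixes q :: "'a::euclidean_space \<Rightarrow> 'a \<Rightarrow> real" and phi :: "'a \<Rightarrow> 'a"
  assumes q: "bilinear q" "\<And>x y. q x y = q y x" "\<And>x. x \<noteq> 0 \<Longrightarrow> q x x > 0"
    and phi: "linear phi" "\<And>x y. q (phi x) y = q x (phi y)"
  obtains x0 lam where "x0 \<noteq> 0" "phi x0 = lam *\<^sub>R x0"
proof -
  obtain x0 lam where x0: "x0 \<noteq> 0" and at_x0: "q (phi x0) x0 = lam * q x0 x0"
    and max: "\<And>y. q (phi y) y \<le> lam * q y y"
    using rayleigh_maximiser[OF q(1) q(3) phi(1)] by blast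
  show thesis using that[OF x0 rayleigh_maximiser_eigenvector[OF q phi max at_x0]] .
qed

subsection \<open>Lie algebras and the Killing form\<close>

locale real_lie_algebra =
  fixes br :: "'a::euclidean_space \<Rightarrow> 'a \<Rightarrow> 'a"
  assumes lie: "lie_algebra br"
begin

lemma lin_r: "linear (br x)" using lie by (simp add: lie_algebra_def)
lemma lin_l: "linear (\<lambda>x. br x y)" using lie by (simp add: lie_algebra_def)
lemma br_self [simp]: "br x x = 0" using lie by (simp add: lie_algebra_def)
lemma jacobi: "br x (br y z) + br y (br z x) + br z (br x y) = 0"
  using lie by (simp add: lie_algebra_def)

lemma br_add_r: "br x (y + z) = br x y + br x z" using lin_r linear_add by blast
lemma br_add_l: "br (x + y) z = br x z + br y z" using linear_add[OF lin_l] by blast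
lemma br_scale_r: "br x (c *\<^sub>R y) = c *\<^sub>R br x y" using lin_r linear_scale by blast
lemma br_scale_l: "br (c *\<^sub>R x) y = c *\<^sub>R br x y" using linear_scale[OF lin_l] by blast
lemma br_diff_r: "br x (y - z) = br x y - br x z" using lin_r linear_diff by blast

lemma br_anti: "br x y = - br y x"
proof -
  have "0 = br (x + y) (x + y)" by simp
  also have "\<dots> = br x x + br y x + (br x y + br y y)" by (simp only: br_add_l br_add_r)
  finally show ?thesis by (simp add: eq_neg_iff_add_eq_0 add.commute)
qed

lemma ad_bracket: "br (br a b) z = br a (br b z) - br b (br a z)"
proof -
  have "br b (br z a) = - br b (br a z)" using br_anti[of z a] lin_r linear_neg by metis
  moreover have "br z (br a b) = - br (br a b) z" by (rule br_anti)
  ultimately show ?thesis using jacobi[of a b z] by (simp add: algebra_simps)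
qed

lemma lin_rr: "linear (\<lambda>w. br x (br z w))"
  using linear_compose[OF lin_r lin_r] by (simp add: o_def)

lemma killing_lin_r: "linear (killing br x)"
  unfolding linear_iff killing_def
  by (simp add: br_add_l br_scale_l br_add_r br_scale_r trace_add trace_scale)

lemma killing_lin_l: "linear (\<lambda>x. killing br x y)"
  unfolding linear_iff killing_def
  by (simp add: br_add_l br_scale_l trace_add trace_scale)

lemma killing_sym: "killing br x y = killing br y x"
  unfolding killing_def using trace_cyclic[OF lin_r lin_r] by blast

text \<open>Brackets act tracelessly: tr ad [a,b] = tr [ad a, ad b] = 0.\<close>
lemma trace_ad_bracket: "trace_map (br (br a b)) = 0"
proof -
  have "trace_map (br (br a b)) = trace_map (\<lambda>z. br a (br b z) - br b (br a z))"
    unfolding trace_map_def by (simp add: ad_bracket)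
  also have "\<dots> = 0" unfolding trace_diff using trace_cyclic[OF lin_r lin_r, of a b] by simp
  finally show ?thesis .
qed

lemma trace_ad_linear: "linear (\<lambda>u. trace_map (br u))"
  unfolding linear_iff trace_map_def
  by (simp add: br_add_l br_scale_l inner_add_left sum.distrib sum_distrib_left)

lemma killing_invariant: "killing br x (br y z) = killing br (br x y) z"
proof -
  have cyc: "trace_map (\<lambda>w. br y (br x (br z w))) = trace_map (\<lambda>w. br x (br z (br y w)))"
    using trace_cyclic[OF lin_r lin_rr, of y x z] by simp
  have "killing br x (br y z) = trace_map (\<lambda>w. br x (br y (br z w)) - br x (br z (br y w)))"
    unfolding killing_def by (simp add: ad_bracket br_diff_r)
  also have "\<dots> = trace_map (\<lambda>w. br x (br y (br z w)) - br y (br x (br z w)))"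
    unfolding trace_diff cyc ..
  also have "\<dots> = killing br (br x y) z"
    unfolding killing_def by (simp add: ad_bracket)
  finally show ?thesis .
qed

end

subsection \<open>Compact simple Lie algebras and Schur's lemma\<close>

locale compact_simple_lie_algebra =
  fixes br :: "'a::euclidean_space \<Rightarrow> 'a \<Rightarrow> 'a"
  assumes cs: "compact_simple br"

sublocale compact_simple_lie_algebra \<subseteq> real_lie_algebra
  using cs by unfold_locales (simp add: compact_simple_def)

context compact_simple_lie_algebra
begin

lemma ideal_trivial: "lie_ideal br I \<Longrightarrow> I = {0} \<or> I = UNIV"
  using cs by (simp add: compact_simple_def)

lemma ip_pos: "x \<noteq> 0 \<Longrightarrow> ip br x x > 0"
  using cs by (simp add: compact_simple_def ip_def)

lemma ip_lin_r: "linear (ip br x)"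
  using linear_compose[OF killing_lin_r[of x] linear_uminus] by (simp add: ip_def[abs_def] o_def)
lemma ip_lin_l: "linear (\<lambda>x. ip br x y)"
  using linear_compose[OF killing_lin_l[of y] linear_uminus] by (simp add: ip_def[abs_def] o_def)
lemma ip_bilinear: "bilinear (ip br)"
  unfolding bilinear_def using ip_lin_r ip_lin_l by (simp add: eta_contract_eq)
lemma ip_sym: "ip br x y = ip br y x" by (simp add: ip_def killing_sym)
lemma ip_invariant: "ip br x (br y z) = ip br (br x y) z" by (simp add: ip_def killing_invariant)

lemma ip_zero_r [simp]: "ip br x 0 = 0" using ip_lin_r linear_0 by blast
lemma ip_add_r: "ip br x (y + z) = ip br x y + ip br x z" using ip_lin_r linear_add by blast
lemma ip_add_l: "ip br (x + y) z = ip br x z + ip br y z" using linear_add[OF ip_lin_l] by blast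
lemma ip_scale_r: "ip br x (c *\<^sub>R y) = c * ip br x y" using ip_lin_r linear_scale by fastforce
lemma ip_scale_l: "ip br (c *\<^sub>R x) y = c * ip br x y" using linear_scale[OF ip_lin_l] by fastforce
lemma ip_neg_l: "ip br (- x) y = - ip br x y" using linear_neg[OF ip_lin_l] by blast
lemma ip_diff_l: "ip br (x - y) z = ip br x z - ip br y z" using linear_diff[OF ip_lin_l] by blast
lemma ip_sum_r: "ip br x (sum f S) = (\<Sum>i\<in>S. ip br x (f i))" using ip_lin_r linear_sum by blast
lemma ip_sum_l: "ip br (sum f S) y = (\<Sum>i\<in>S. ip br (f i) y)" using linear_sum[OF ip_lin_l] by blast

lemma ip_nondeg: "(\<And>z. ip br w z = 0) \<Longrightarrow> w = 0"
  using ip_pos by force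

lemma ip_eqI: "(\<And>z. ip br v z = ip br w z) \<Longrightarrow> v = w"
  using ip_nondeg[of "v - w"] by (simp add: ip_diff_l)

text \<open>The centre is trivial: a central x has B(x,x) = tr(ad x o ad x) = 0.\<close>
lemma centre_trivial: "(\<And>y. br x y = 0) \<Longrightarrow> x = 0"
proof (rule ccontr)
  assume central: "\<And>y. br x y = 0" and "x \<noteq> 0"
  have "ip br x x = 0" by (simp add: ip_def killing_def trace_map_def central)
  with ip_pos[OF \<open>x \<noteq> 0\<close>] show False by simp
qed

text \<open>g is perfect: the span of all brackets is a nonzero ideal, hence all of g.\<close>
lemma perfect: "span (range (\<lambda>(x, y). br x y)) = UNIV"
proof -
  let ?D = "span (range (\<lambda>(x, y). br x y))"
  have bracket_in: "br x y \<in> ?D" for x y by (rule span_base) auto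
  have "lie_ideal br ?D"
    unfolding lie_ideal_def using bracket_in by (simp add: subspace_span)
  moreover obtain x y where "br x y \<noteq> 0" using cs by (auto simp: compact_simple_def)
  ultimately show ?thesis using ideal_trivial bracket_in by blast
qed

lemma trace_ad_zero: "trace_map (br u) = 0"
proof (rule linear_eq_0_on_span[OF trace_ad_linear])
  show "u \<in> span (range (\<lambda>(x, y). br x y))" by (simp add: perfect)
qed (auto simp: trace_ad_bracket)

text \<open>It is
  self-adjoint, because B(phi x,y) - B(x,phi y) is the trace of ad phi[y,x].\<close>
lemma intertwiner_selfadjoint:
  assumes phi: "linear phi" and comm: "\<And>x y. br (phi x) y = br x (phi y)"
  shows "ip br (phi x) y = ip br x (phi y)"
proof -
  have lin_phi_br: "linear (\<lambda>z. phi (br y z))"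
    using linear_compose[OF lin_r phi] by (simp add: o_def)
  have "killing br (phi x) y = trace_map (\<lambda>z. br x (phi (br y z)))"
    unfolding killing_def by (simp add: comm)
  also have "\<dots> = trace_map (\<lambda>z. phi (br y (br x z)))"
    using trace_cyclic[OF lin_r lin_phi_br, of x] by simp
  finally have left: "killing br (phi x) y = trace_map (\<lambda>z. phi (br y (br x z)))" .
  have "killing br x (phi y) = trace_map (\<lambda>z. br x (br y (phi z)))"
    unfolding killing_def by (simp add: comm)
  also have "\<dots> = trace_map (\<lambda>z. phi (br x (br y z)))"
    using trace_cyclic[OF lin_rr phi, of x y] by simp
  finally have right: "killing br x (phi y) = trace_map (\<lambda>z. phi (br x (br y z)))" .
  have "killing br (phi x) y - killing br x (phi y) = trace_map (\<lambda>z. phi (br (br y x) z))"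
    unfolding left right trace_diff[symmetric] by (simp add: ad_bracket linear_diff[OF phi])
  also have "\<dots> = trace_map (\<lambda>z. br (br y x) (phi z))"
    using trace_cyclic[OF phi lin_r, of "br y x"] by simp
  also have "\<dots> = trace_map (br (phi (br y x)))" by (simp add: comm[symmetric])
  also have "\<dots> = 0" by (rule trace_ad_zero)
  finally show ?thesis by (simp add: ip_def)
qed

lemma intertwiner_commutes_ad:
  assumes phi: "linear phi" and comm: "\<And>x y. br (phi x) y = br x (phi y)"
  shows "phi (br x y) = br (phi x) y"
proof (rule ip_eqI)
  fix z
  have "ip br (phi (br x y)) z = ip br (br x y) (phi z)"
    by (rule intertwiner_selfadjoint[OF phi comm])
  also have "\<dots> = ip br x (br y (phi z))" by (simp add: ip_invariant)
  also have "\<dots> = ip br (br x (phi y)) z" by (simp add: ip_invariant comm[symmetric])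
  also have "\<dots> = ip br (br (phi x) y) z" by (simp add: comm)
  finally show "ip br (phi (br x y)) z = ip br (br (phi x) y) z" .
qed

lemma intertwiner_scalar:
  assumes phi: "linear phi" and comm: "\<And>x y. br (phi x) y = br x (phi y)"
  obtains lam where "\<And>x. phi x = lam *\<^sub>R x"
proof -
  obtain x0 lam where x0: "x0 \<noteq> 0" "phi x0 = lam *\<^sub>R x0"
    using selfadjoint_has_eigenvector[OF ip_bilinear ip_sym ip_pos phi
        intertwiner_selfadjoint[OF phi comm]] by blast
  define E where "E = {x. phi x = lam *\<^sub>R x}"
  have "subspace E"
    unfolding subspace_def E_def
    by (simp add: linear_0[OF phi] linear_add[OF phi] linear_scale[OF phi] scaleR_add_right)
  hence "lie_ideal br E"
    unfolding lie_ideal_def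
    by (simp add: E_def intertwiner_commutes_ad[OF phi comm] br_scale_l)
  moreover have "x0 \<in> E" using x0 by (simp add: E_def)
  ultimately have "E = UNIV" using ideal_trivial x0(1) by blast
  thus thesis using that by (auto simp: E_def)
qed

end

subsection \<open>2-forms relative to an orthonormal basis\<close>

locale compact_simple_onb = compact_simple_lie_algebra br
  for br :: "'a::euclidean_space \<Rightarrow> 'a \<Rightarrow> 'a" +
  fixes e :: "nat \<Rightarrow> 'a"
  assumes onb: "orthonormal_basis br e"
begin

lemma onb_ip: "i < DIM('a) \<Longrightarrow> j < DIM('a) \<Longrightarrow> ip br (e i) (e j) = (if i = j then 1 else 0)"
  using onb unfolding orthonormal_basis_def by blast

lemma onb_coeff:
  assumes j: "j < DIM('a)"
  shows "ip br (e j) (\<Sum>i<DIM('a). c i *\<^sub>R e i) = c j"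
proof -
  have "ip br (e j) (\<Sum>i<DIM('a). c i *\<^sub>R e i) = (\<Sum>i<DIM('a). if i = j then c i else 0)"
    unfolding ip_sum_r ip_scale_r using j by (intro sum.cong) (auto simp: onb_ip)
  also have "\<dots> = c j" using j by simp
  finally show ?thesis .
qed

lemma onb_inj: "inj_on e {..<DIM('a)}"
proof (rule inj_onI)
  fix i j assume "i \<in> {..<DIM('a)}" "j \<in> {..<DIM('a)}" "e i = e j"
  thus "i = j" using onb_ip[of i j] onb_ip[of j j] by (auto split: if_splits)
qed

lemma onb_independent: "independent (e ` {..<DIM('a)})"
proof
  assume "dependent (e ` {..<DIM('a)})"
  then obtain u where u: "\<exists>v\<in>e ` {..<DIM('a)}. u v \<noteq> 0" "(\<Sum>v\<in>e ` {..<DIM('a)}. u v *\<^sub>R v) = 0"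
    using dependent_finite[of "e ` {..<DIM('a)}"] by auto
  have sum0: "(\<Sum>i<DIM('a). u (e i) *\<^sub>R e i) = 0" using u(2) by (simp add: sum.reindex[OF onb_inj])
  from u(1) obtain j where "j < DIM('a)" "u (e j) \<noteq> 0" by auto
  with onb_coeff[of j "\<lambda>i. u (e i)"] sum0 show False by simp
qed

lemma onb_span: "span (e ` {..<DIM('a)}) = UNIV"
proof -
  have "card (e ` {..<DIM('a)}) = DIM('a)" using card_image[OF onb_inj] by simp
  hence "UNIV \<subseteq> span (e ` {..<DIM('a)})"
    using card_ge_dim_independent[of "e ` {..<DIM('a)}" UNIV] onb_independent by simp
  thus ?thesis by auto
qed

lemma onb_expand: "x = (\<Sum>i<DIM('a). ip br (e i) x *\<^sub>R e i)"
proof -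
  have "x \<in> span (e ` {..<DIM('a)})" by (simp add: onb_span)
  then obtain u where "x = (\<Sum>v\<in>e ` {..<DIM('a)}. u v *\<^sub>R v)"
    using span_finite[of "e ` {..<DIM('a)}"] by auto
  hence x: "x = (\<Sum>i<DIM('a). u (e i) *\<^sub>R e i)" by (simp add: sum.reindex[OF onb_inj])
  have "(\<Sum>i<DIM('a). ip br (e i) x *\<^sub>R e i) = (\<Sum>i<DIM('a). u (e i) *\<^sub>R e i)"
    by (rule sum.cong[OF refl]) (metis x lessThan_iff onb_coeff)
  with x show ?thesis by simp
qed

lemma linear_expand:
  assumes "linear f"
  shows "f x = (\<Sum>i<DIM('a). ip br (e i) x *\<^sub>R f (e i))"
proof -
  have "f x = f (\<Sum>i<DIM('a). ip br (e i) x *\<^sub>R e i)" using onb_expand[of x] by (rule arg_cong)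
  also have "\<dots> = (\<Sum>i<DIM('a). ip br (e i) x *\<^sub>R f (e i))"
    using assms by (simp add: linear_sum linear_scale)
  finally show ?thesis .
qed

lemma alt2_expand:
  assumes "alt2 b"
  shows "b x y = (\<Sum>j<DIM('a). \<Sum>k<DIM('a). ip br (e j) x * ip br (e k) y * b (e j) (e k))"
proof -
  have lin_l: "linear (\<lambda>x. b x y)" and lin_r: "\<And>x. linear (b x)"
    using assms by (simp_all add: alt2_def)
  have "b x y = (\<Sum>j<DIM('a). ip br (e j) x * b (e j) y)"
    using linear_expand[OF lin_l, of x] by simp
  also have "\<dots> = (\<Sum>j<DIM('a). ip br (e j) x * (\<Sum>k<DIM('a). ip br (e k) y * b (e j) (e k)))"
  proof (rule sum.cong[OF refl])
    fix j
    show "ip br (e j) x * b (e j) y = ip br (e j) x * (\<Sum>k<DIM('a). ip br (e k) y * b (e j) (e k))"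
      using linear_expand[OF lin_r[of "e j"], of y] by simp
  qed
  finally show ?thesis by (simp add: sum_distrib_left mult.assoc)
qed

lemma alt2_eq:
  assumes "alt2 b" "alt2 c" "\<And>j k. j < DIM('a) \<Longrightarrow> k < DIM('a) \<Longrightarrow> b (e j) (e k) = c (e j) (e k)"
  shows "b = c"
proof (intro ext)
  fix x y show "b x y = c x y"
    by (simp add: alt2_expand[OF assms(1), of x y] alt2_expand[OF assms(2), of x y] assms(3))
qed

text \<open>bracket_vec is the map Lambda^2 g -> g, x /\ y |-> [x,y], whose kernel is
  g-perp; bracket_form v is the 2-form dual to v under this map, i.e.
  ip2 (bracket_form v) d = <v, bracket_vec d>.\<close>
definition bracket_vec :: "('a \<Rightarrow> 'a \<Rightarrow> real) \<Rightarrow> 'a" where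
  "bracket_vec b = (\<Sum>j<DIM('a). \<Sum>k<DIM('a). b (e j) (e k) *\<^sub>R br (e j) (e k))"

definition bracket_form :: "'a \<Rightarrow> 'a \<Rightarrow> 'a \<Rightarrow> real" where
  "bracket_form v = (\<lambda>y z. ip br v (br y z))"

lemma gperp_iff: "d \<in> gperp br e \<longleftrightarrow> alt2 d \<and> bracket_vec d = 0"
  by (simp add: gperp_def bracket_vec_def)

lemma alt2_zero: "alt2 (\<lambda>x y. 0)" by (simp add: alt2_def linear_zero)

lemma alt2_diff: "alt2 b \<Longrightarrow> alt2 c \<Longrightarrow> alt2 (\<lambda>x y. b x y - c x y)"
  unfolding alt2_def by (auto intro: linear_compose_sub)

lemma bracket_vec_diff: "bracket_vec (\<lambda>x y. b x y - c x y) = bracket_vec b - bracket_vec c"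
  by (simp add: bracket_vec_def scaleR_diff_left sum_subtractf)

lemma bracket_form_alt2: "alt2 (bracket_form v)"
proof -
  have "linear (\<lambda>z. ip br v (br y z))" for y
    using linear_compose[OF lin_r ip_lin_r] by (simp add: o_def)
  moreover have "linear (\<lambda>y. ip br v (br y z))" for z
    using linear_compose[OF lin_l ip_lin_r] by (simp add: o_def)
  ultimately show ?thesis unfolding alt2_def bracket_form_def by simp
qed

lemma ip2_bracket_form: "ip2 e (bracket_form v) d = ip br v (bracket_vec d)"
  by (simp add: ip2_def bracket_form_def bracket_vec_def ip_sum_r ip_scale_r mult.commute)

lemma ip2_self_zero:
  assumes "alt2 d" "ip2 e d d = 0"
  shows "d = (\<lambda>x y. 0)"
proof (rule alt2_eq[OF assms(1) alt2_zero])
  fix j k assume jk: "j < DIM('a)" "k < DIM('a)"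
  have "(\<Sum>j<DIM('a). \<Sum>k<DIM('a). d (e j) (e k) * d (e j) (e k)) = 0"
    using assms(2) by (simp add: ip2_def)
  hence "\<forall>j\<in>{..<DIM('a)}. \<forall>k\<in>{..<DIM('a)}. d (e j) (e k) * d (e j) (e k) = 0"
    by (simp add: sum_nonneg_eq_0_iff sum_nonneg)
  with jk show "d (e j) (e k) = 0" by simp
qed

text \<open>v |-> bracket_vec (bracket_form v) is injective (its quadratic form is
  the ip2-norm of bracket_form v, and the centre is trivial), hence bijective.\<close>
lemma bracket_vec_form_surj: "\<exists>v. bracket_vec (bracket_form v) = w"
proof -
  let ?L = "\<lambda>v. bracket_vec (bracket_form v)"
  have lin: "linear ?L"
    unfolding linear_iff bracket_vec_def bracket_form_def
    by (simp add: ip_add_l ip_scale_l scaleR_add_left sum.distrib scaleR_sum_right)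
  have "v = 0" if "?L v = 0" for v
  proof -
    have "ip2 e (bracket_form v) (bracket_form v) = 0"
      using that by (simp add: ip2_bracket_form)
    hence "bracket_form v = (\<lambda>x y. 0)" by (rule ip2_self_zero[OF bracket_form_alt2])
    hence "\<forall>y z. ip br (br v y) z = 0" by (simp add: bracket_form_def ip_invariant fun_eq_iff)
    thus "v = 0" using ip_nondeg centre_trivial by blast
  qed
  hence "inj ?L" using linear_inj_iff_eq_0[OF lin] by blast
  thus ?thesis using linear_injective_imp_surjective[OF lin] by (metis surjD)
qed

lemma proj_gperp_eqI:
  assumes c: "c \<in> gperp br e" and orth: "\<forall>d\<in>gperp br e. ip2 e (\<lambda>x y. b x y - c x y) d = 0"
  shows "proj_gperp br e b = c"
  unfolding proj_gperp_def
proof (rule the_equality)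
  show "c \<in> gperp br e \<and> (\<forall>d\<in>gperp br e. ip2 e (\<lambda>x y. b x y - c x y) d = 0)" using c orth by blast
next
  fix c' assume c': "c' \<in> gperp br e \<and> (\<forall>d\<in>gperp br e. ip2 e (\<lambda>x y. b x y - c' x y) d = 0)"
  define D where "D = (\<lambda>x y. c x y - c' x y)"
  have D: "D \<in> gperp br e" using c c' unfolding D_def gperp_iff
    by (auto simp: bracket_vec_diff intro: alt2_diff)
  have "ip2 e (\<lambda>x y. b x y - c' x y) D - ip2 e (\<lambda>x y. b x y - c x y) D = 0"
    using D c' orth by simp
  hence "ip2 e D D = 0" by (simp add: ip2_def D_def sum_subtractf[symmetric] algebra_simps)
  hence "D = (\<lambda>x y. 0)" using D by (intro ip2_self_zero) (simp_all add: gperp_iff)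
  thus "c' = c" by (simp add: D_def fun_eq_iff)
qed

text \<open>The orthogonal complement of g-perp consists of the forms bracket_form v,
  so the projection of b vanishes exactly when b is such a form.\<close>
lemma proj_gperp_zero_iff:
  assumes b: "alt2 b"
  shows "proj_gperp br e b = (\<lambda>x y. 0) \<longleftrightarrow> (\<exists>v. b = bracket_form v)"
proof
  obtain v where v: "bracket_vec (bracket_form v) = bracket_vec b"
    using bracket_vec_form_surj by blast
  have "(\<lambda>x y. b x y - bracket_form v x y) \<in> gperp br e"
    unfolding gperp_iff using v b by (simp add: alt2_diff bracket_form_alt2 bracket_vec_diff)
  moreover have "(\<lambda>x y. b x y - (b x y - bracket_form v x y)) = bracket_form v"
    by (simp add: fun_eq_iff)
  ultimately have "proj_gperp br e b = (\<lambda>x y. b x y - bracket_form v x y)"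
    by (intro proj_gperp_eqI) (simp_all add: ip2_bracket_form gperp_iff)
  moreover assume "proj_gperp br e b = (\<lambda>x y. 0)"
  ultimately have "b = bracket_form v" by (simp add: fun_eq_iff)
  thus "\<exists>v. b = bracket_form v" by blast
next
  assume "\<exists>v. b = bracket_form v"
  then obtain w where w: "b = bracket_form w" by blast
  show "proj_gperp br e b = (\<lambda>x y. 0)"
    by (rule proj_gperp_eqI) (simp_all add: w gperp_iff alt2_zero bracket_vec_def ip2_bracket_form)
qed

subsection \<open>The kernel of Theta\<close>

lemma Theta_zero_iff:
  "Theta br e T = (\<lambda>x y z. 0) \<longleftrightarrow> (\<forall>k<DIM('a). proj_gperp br e (T (e k)) = (\<lambda>y z. 0))"
proof
  assume Theta0: "Theta br e T = (\<lambda>x y z. 0)"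
  show "\<forall>k<DIM('a). proj_gperp br e (T (e k)) = (\<lambda>y z. 0)"
  proof (intro allI impI ext)
    fix k y z assume k: "k < DIM('a)"
    have "0 = Theta br e T (e k) y z" using Theta0 by simp
    also have "\<dots> = (\<Sum>i<DIM('a). (if i = k then proj_gperp br e (T (e i)) y z else 0))"
      unfolding Theta_def using k by (intro sum.cong) (auto simp: onb_ip)
    also have "\<dots> = proj_gperp br e (T (e k)) y z" using k by simp
    finally show "proj_gperp br e (T (e k)) y z = 0" by simp
  qed
qed (simp add: Theta_def fun_eq_iff)

lemma Theta_kernel_representation:
  assumes T: "alt3 T" and Theta0: "Theta br e T = (\<lambda>x y z. 0)"
  obtains phi where "linear phi" "\<And>x y z. T x y z = ip br (phi x) (br y z)"
proof -
  have alt2_T: "\<And>x. alt2 (T x)" and lin_T: "\<And>y z. linear (\<lambda>x. T x y z)"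
    using T unfolding alt3_def by blast+
  have "\<exists>v. T (e k) = bracket_form v" if k: "k < DIM('a)" for k
  proof -
    have "alt2 (T (e k))" by (rule alt2_T)
    moreover have "proj_gperp br e (T (e k)) = (\<lambda>y z. 0)"
      using Theta0 k unfolding Theta_zero_iff by blast
    ultimately show ?thesis using proj_gperp_zero_iff by blast
  qed
  then obtain V where V: "\<And>k. k < DIM('a) \<Longrightarrow> T (e k) = bracket_form (V k)" by metis
  define phi where "phi x = (\<Sum>k<DIM('a). ip br (e k) x *\<^sub>R V k)" for x
  have "linear phi" unfolding phi_def linear_iff
    by (simp add: ip_add_r ip_scale_r scaleR_add_left sum.distrib scaleR_sum_right)
  moreover have "T x y z = ip br (phi x) (br y z)" for x y z
  proof -
    have "T x y z = (\<Sum>k<DIM('a). ip br (e k) x * T (e k) y z)"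
      using linear_expand[OF lin_T, of x] by simp
    also have "\<dots> = (\<Sum>k<DIM('a). ip br (e k) x * ip br (V k) (br y z))"
      by (intro sum.cong) (simp_all add: V bracket_form_def)
    also have "\<dots> = ip br (phi x) (br y z)"
      unfolding phi_def by (simp add: ip_sum_l ip_scale_l)
    finally show ?thesis .
  qed
  ultimately show thesis by (rule that)
qed

lemma skew_representation_intertwines:
  assumes skew: "\<And>x y z. T x y z = - T y x z" and rep: "\<And>x y z. T x y z = ip br (phi x) (br y z)"
  shows "br (phi x) y = br x (phi y)"
proof (rule ip_eqI)
  fix z
  have "ip br (br (phi x) y) z = - ip br (br (phi y) x) z"
    using skew[of x y z] by (simp add: rep ip_invariant)
  also have "\<dots> = ip br (br x (phi y)) z"
    using br_anti[of x "phi y"] by (simp add: ip_def linear_neg[OF killing_lin_l])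
  finally show "ip br (br (phi x) y) z = ip br (br x (phi y)) z" .
qed

lemma omega_ip: "omega_g br x y z = - ip br x (br y z)"
  by (simp add: ip_def omega_g_def)

lemma omega_bracket_form: "(\<lambda>y z. c * omega_g br x y z) = bracket_form ((- c) *\<^sub>R x)"
  by (simp add: fun_eq_iff bracket_form_def ip_scale_l ip_neg_l omega_ip)

lemma omega_alt3: "alt3 (\<lambda>x y z. c * omega_g br x y z)"
  unfolding alt3_def
proof (intro conjI allI)
  fix x show "alt2 (\<lambda>y z. c * omega_g br x y z)"
    unfolding omega_bracket_form by (rule bracket_form_alt2)
next
  fix y z show "linear (\<lambda>x. c * omega_g br x y z)"
    unfolding omega_g_def using killing_lin_l[of "br y z"] by (simp add: linear_iff algebra_simps)
next
  fix x y z show "c * omega_g br x y z = - (c * omega_g br y x z)"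
    unfolding omega_g_def killing_invariant
    using br_anti[of x y] linear_neg[OF killing_lin_l[of z], of "br y x"] by simp
qed

lemma omega_in_kernel: "Theta br e (\<lambda>x y z. c * omega_g br x y z) = (\<lambda>x y z. 0)"
  unfolding Theta_zero_iff omega_bracket_form
  using proj_gperp_zero_iff[OF bracket_form_alt2] by blast

text \<open>Conversely, by Schur's lemma the map phi representing a kernel element is
  a scalar lam, so the element is -lam omega_g.\<close>
lemma Theta_kernel_multiple_of_omega:
  assumes T: "alt3 T" and Theta0: "Theta br e T = (\<lambda>x y z. 0)"
  shows "\<exists>c. T = (\<lambda>x y z. c * omega_g br x y z)"
proof -
  obtain phi where phi: "linear phi" and rep: "\<And>x y z. T x y z = ip br (phi x) (br y z)"
    using Theta_kernel_representation[OF T Theta0] by blast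
  have skew: "\<And>x y z. T x y z = - T y x z" using T unfolding alt3_def by blast
  obtain lam where "\<And>x. phi x = lam *\<^sub>R x"
    using intertwiner_scalar[OF phi skew_representation_intertwines[OF skew rep]] by blast
  hence "T = (\<lambda>x y z. (- lam) * omega_g br x y z)"
    by (simp add: fun_eq_iff rep ip_scale_l omega_ip)
  thus ?thesis by blast
qed

end

theorem lemma4p11:
  fixes br :: "'a::euclidean_space \<Rightarrow> 'a \<Rightarrow> 'a" and e :: "nat \<Rightarrow> 'a"
  assumes "compact_simple br"
    and "DIM('a) \<ge> 8"
    and "orthonormal_basis br e"
  shows "{T. alt3 T \<and> Theta br e T = (\<lambda>x y z. 0)} = {(\<lambda>x y z. c * omega_g br x y z) | c. True}"
proof -
  interpret compact_simple_onb br e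
    using assms(1,3) by unfold_locales
  show ?thesis
    using Theta_kernel_multiple_of_omega omega_alt3 omega_in_kernel by blast
qed

end
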